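(* Let $k\ge 1$, $d = 2^k$, and suppose $d-1$ is a prime number. Let $\Omega$ be a set with $d$ elements, $S_d=\mathrm{Aut}(\Omega)$, and let $G \subset S_d$ be a primitive solvable subgroup. Then every element $g \in G$ with $g \neq 1_G$ has at most $2$ fixed points on $\Omega$.
   Context: A subgroup $G \subset \mathrm{Aut}(\Omega)$ is primitive if it is transitive and the stabilizer $G_x$ of a point $x\in\Omega$ is a maximal subgroup of $G$. *)

theory Defs
  imports "HOL-Algebra.Algebra" "HOL-Computational_Algebra.Primes"
begin

definition maximal_subgroup :: "'a set \<Rightarrow> ('a, 'b) monoid_scheme \<Rightarrow> bool" where
  "maximal_subgroup H G \<longleftrightarrow> subgroup H G \<and> H \<noteq> carrier G \<and>
     (\<forall>K. subgroup K G \<and> H \<subseteq> K \<longrightarrow> K = H \<or> K = carrier G)"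

abbreviation perm_subgroup :: "'a set \<Rightarrow> ('a \<Rightarrow> 'a) set \<Rightarrow> ('a \<Rightarrow> 'a) monoid" where
  "perm_subgroup \<Omega> G \<equiv> (BijGroup \<Omega>)\<lparr>carrier := G\<rparr>"

definition transitive_perm_group :: "'a set \<Rightarrow> ('a \<Rightarrow> 'a) set \<Rightarrow> bool" where
  "transitive_perm_group \<Omega> G \<longleftrightarrow> (\<forall>x\<in>\<Omega>. \<forall>y\<in>\<Omega>. \<exists>g\<in>G. g x = y)"

definition primitive_perm_group :: "'a set \<Rightarrow> ('a \<Rightarrow> 'a) set \<Rightarrow> bool" where
  "primitive_perm_group \<Omega> G \<longleftrightarrow> subgroup G (BijGroup \<Omega>) \<and> transitive_perm_group \<Omega> G \<and>
     (\<forall>x\<in>\<Omega>. maximal_subgroup (stabilizer (perm_subgroup \<Omega> G) (\<lambda>g. g) x) (perm_subgroup \<Omega> G))"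

end

theory Submission
  imports Defs
begin

(* A solvable group has a nontrivial abelian normal subgroup N (the last nontrivial term of
   its derived series); in a primitive group N is transitive, hence regular.  Suppose g \<noteq> 1
   fixes three points x, y, z.  The point stabilizer G_x is then nontrivial and solvable, so it
   has a nontrivial normal subgroup E that is elementary abelian of prime exponent r.  As G_x
   is maximal and N is regular, the centralizer of E in N lies in G_x, and it follows that x
   is the only fixed point of E.  Counting fixed points of the r-group E shows that r divides
   d - 1, which is prime; hence the abelian group E is transitive, so regular, on the d - 1
   other points.  Conjugation by g preserves E and fixes the element of E mapping y to z, so
   the centralizer of g in E is a nontrivial subgroup of a group of prime order, i.e. all of
   E, and g fixes every point. *)

section \<open>Groups\<close>

lemma (in group) inv_mult_cancel_left:
  "x \<in> carrier G \<Longrightarrow> y \<in> carrier G \<Longrightarrow> inv x \<otimes> (x \<otimes> y) = y"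
  by (simp add: m_assoc[symmetric])

lemma (in group) mult_inv_cancel_left:
  "x \<in> carrier G \<Longrightarrow> y \<in> carrier G \<Longrightarrow> x \<otimes> (inv x \<otimes> y) = y"
  by (simp add: m_assoc[symmetric])

lemma (in group) conj_nat_pow:
  assumes "a \<in> carrier G" "x \<in> carrier G"
  shows "(x \<otimes> a \<otimes> inv x) [^] (n::nat) = x \<otimes> a [^] n \<otimes> inv x"
  using assms by (induction n) (simp_all add: m_assoc inv_mult_cancel_left)

lemma (in group) conj_mult:
  assumes "a \<in> carrier G" "b \<in> carrier G" "x \<in> carrier G"
  shows "x \<otimes> a \<otimes> inv x \<otimes> (x \<otimes> b \<otimes> inv x) = x \<otimes> (a \<otimes> b) \<otimes> inv x"
  using assms by (simp add: m_assoc inv_mult_cancel_left)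

lemma (in group) normal_in_subgroup_conj_closed:
  assumes "subgroup S G" "A \<lhd> G\<lparr>carrier := S\<rparr>" "s \<in> S" "a \<in> A"
  shows "s \<otimes> a \<otimes> inv s \<in> A"
  using normal.inv_op_closed2[OF assms(2), of s a] assms(3,4) m_inv_consistent[OF assms(1,3)] by simp

lemma (in group) set_mult_subgroup:
  assumes U: "subgroup U G" and S: "subgroup S G"
    and conj: "\<And>s u. s \<in> S \<Longrightarrow> u \<in> U \<Longrightarrow> s \<otimes> u \<otimes> inv s \<in> U"
  shows "subgroup (U <#> S) G"
proof (rule subgroupI)
  show "U <#> S \<subseteq> carrier G"
    using setmult_subset_G[OF subgroup.subset[OF U] subgroup.subset[OF S]] .
  have "\<one> \<otimes> \<one> \<in> U <#> S"
    unfolding set_mult_def using subgroup.one_closed[OF U] subgroup.one_closed[OF S] by blast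
  then show "U <#> S \<noteq> {}"
    by blast
next
  fix a assume "a \<in> U <#> S"
  then obtain u s where us: "u \<in> U" "s \<in> S" "a = u \<otimes> s"
    by (auto simp: set_mult_def)
  have c: "u \<in> carrier G" "s \<in> carrier G"
    using us subgroup.subset[OF U] subgroup.subset[OF S] by auto
  have "inv a = (inv s \<otimes> inv u \<otimes> inv (inv s)) \<otimes> inv s"
    using us(3) c by (simp add: m_assoc inv_mult_group)
  moreover have "inv s \<otimes> inv u \<otimes> inv (inv s) \<in> U"
    using conj us subgroup.m_inv_closed[OF U] subgroup.m_inv_closed[OF S] by blast
  moreover have "inv s \<in> S"
    using us subgroup.m_inv_closed[OF S] by blast
  ultimately show "inv a \<in> U <#> S"
    unfolding set_mult_def by blast
next
  fix a b assume "a \<in> U <#> S" "b \<in> U <#> S"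
  then obtain u s u' s' where us: "u \<in> U" "s \<in> S" "a = u \<otimes> s"
    and us': "u' \<in> U" "s' \<in> S" "b = u' \<otimes> s'"
    by (auto simp: set_mult_def)
  have c: "u \<in> carrier G" "s \<in> carrier G" "u' \<in> carrier G" "s' \<in> carrier G"
    using us us' subgroup.subset[OF U] subgroup.subset[OF S] by auto
  have "a \<otimes> b = (u \<otimes> (s \<otimes> u' \<otimes> inv s)) \<otimes> (s \<otimes> s')"
    using us(3) us'(3) c by (simp add: m_assoc inv_mult_cancel_left mult_inv_cancel_left)
  moreover have "u \<otimes> (s \<otimes> u' \<otimes> inv s) \<in> U"
    using conj us us' subgroup.m_closed[OF U] by blast
  moreover have "s \<otimes> s' \<in> S"
    using us us' subgroup.m_closed[OF S] by blast
  ultimately show "a \<otimes> b \<in> U <#> S"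
    unfolding set_mult_def by blast
qed

lemma (in group) subgroups_subset_set_mult:
  assumes U: "subgroup U G" and S: "subgroup S G"
  shows "U \<subseteq> U <#> S" "S \<subseteq> U <#> S"
proof -
  show "U \<subseteq> U <#> S"
  proof
    fix u assume "u \<in> U"
    then have "u = u \<otimes> \<one>"
      using subgroup.subset[OF U] by auto
    then show "u \<in> U <#> S"
      using \<open>u \<in> U\<close> subgroup.one_closed[OF S] unfolding set_mult_def by blast
  qed
  show "S \<subseteq> U <#> S"
  proof
    fix s assume "s \<in> S"
    then have "s = \<one> \<otimes> s"
      using subgroup.subset[OF S] by auto
    then show "s \<in> U <#> S"
      using \<open>s \<in> S\<close> subgroup.one_closed[OF U] unfolding set_mult_def by blast
  qed
qed

definition centralizer :: "('a, 'b) monoid_scheme \<Rightarrow> 'a set \<Rightarrow> 'a set" where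
  "centralizer G K = {g \<in> carrier G. \<forall>k\<in>K. g \<otimes>\<^bsub>G\<^esub> k = k \<otimes>\<^bsub>G\<^esub> g}"

lemma (in group) centralizer_subgroup:
  assumes "K \<subseteq> carrier G"
  shows "subgroup (centralizer G K) G"
proof (rule subgroupI)
  show "centralizer G K \<subseteq> carrier G"
    by (auto simp: centralizer_def)
  have "\<one> \<in> centralizer G K"
    using assms by (auto simp: centralizer_def)
  then show "centralizer G K \<noteq> {}"
    by blast
next
  fix a assume "a \<in> centralizer G K"
  then have "a \<in> carrier G" "\<And>k. k \<in> K \<Longrightarrow> a \<otimes> k = k \<otimes> a"
    by (auto simp: centralizer_def)
  then show "inv a \<in> centralizer G K"
    using assms by (auto simp: centralizer_def inv_solve_left inv_solve_right m_assoc)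
next
  fix a b assume "a \<in> centralizer G K" "b \<in> centralizer G K"
  then have "a \<in> carrier G" "b \<in> carrier G" "\<And>k. k \<in> K \<Longrightarrow> a \<otimes> k = k \<otimes> a \<and> b \<otimes> k = k \<otimes> b"
    by (auto simp: centralizer_def)
  then show "a \<otimes> b \<in> centralizer G K"
    using assms by (auto simp: centralizer_def) (metis m_assoc subsetD)
qed

lemma (in group) centralizer_conj_closed:
  assumes S: "subgroup S G" and K: "K \<subseteq> carrier G"
    and conj: "\<And>s k. s \<in> S \<Longrightarrow> k \<in> K \<Longrightarrow> s \<otimes> k \<otimes> inv s \<in> K"
    and s: "s \<in> S" and c: "c \<in> centralizer G K"
  shows "s \<otimes> c \<otimes> inv s \<in> centralizer G K"
proof -
  have sc: "s \<in> carrier G" "c \<in> carrier G"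
    using s c subgroup.subset[OF S] by (auto simp: centralizer_def)
  have "s \<otimes> c \<otimes> inv s \<otimes> k = k \<otimes> (s \<otimes> c \<otimes> inv s)" if k: "k \<in> K" for k
  proof -
    define k' where "k' = inv s \<otimes> k \<otimes> inv (inv s)"
    have "k' \<in> K"
      unfolding k'_def using conj S s k by (simp add: subgroup.m_inv_closed)
    then have "c \<otimes> k' = k' \<otimes> c" "k' \<in> carrier G"
      using c K by (auto simp: centralizer_def)
    moreover have "k = s \<otimes> k' \<otimes> inv s"
      using subsetD[OF K k] sc by (simp add: k'_def m_assoc inv_mult_cancel_left mult_inv_cancel_left)
    ultimately show ?thesis
      using sc by (simp add: conj_mult)
  qed
  then show ?thesis
    using sc by (simp add: centralizer_def)
qed

lemma (in group) commute_if_derived_trivial: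
  assumes "T \<subseteq> carrier G" "derived G T = {\<one>}" "a \<in> T" "b \<in> T"
  shows "a \<otimes> b = b \<otimes> a"
proof -
  have "a \<otimes> b \<otimes> inv a \<otimes> inv b \<in> derived G T"
    unfolding derived_def using assms(3,4) by (intro generate.incl) blast
  then have "a \<otimes> b \<otimes> inv a \<otimes> inv b = \<one>"
    using assms(2) by blast
  moreover have "a \<in> carrier G" "b \<in> carrier G"
    using assms(1,3,4) by auto
  ultimately show ?thesis
    by (metis inv_closed inv_inv inv_solve_right inv_equality m_closed)
qed

lemma (in group) derived_series_normal: "(derived G ^^ n) (carrier G) \<lhd> G"
  by (induction n) (simp_all add: normal_self derived_is_normal)

lemma (in group) solvable_imp_abelian_normal_subgroup:
  assumes "solvable G" and "carrier G \<noteq> {\<one>}"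
  obtains A where "A \<lhd> G" "A \<noteq> {\<one>}" "\<And>a b. a \<in> A \<Longrightarrow> b \<in> A \<Longrightarrow> a \<otimes> b = b \<otimes> a"
proof -
  let ?D = "\<lambda>n. (derived G ^^ n) (carrier G)"
  obtain n where "?D n = {\<one>}"
    using assms(1) solvable_iff_trivial_derived_seq by blast
  moreover have "?D 0 \<noteq> {\<one>}"
    using assms(2) by simp
  ultimately obtain k where "\<forall>i\<le>k. ?D i \<noteq> {\<one>}" "?D (Suc k) = {\<one>}"
    using ex_least_nat_less[of "\<lambda>n. ?D n = {\<one>}" n] by blast
  then have k: "?D k \<noteq> {\<one>}" "derived G (?D k) = {\<one>}"
    by auto
  show thesis
    using that[OF derived_series_normal k(1)] commute_if_derived_trivial[OF _ k(2)]
      exp_of_derived_in_carrier by blast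
qed

lemma (in group) solvable_imp_subgroup_solvable:
  assumes "solvable G" and H: "subgroup H G"
  shows "solvable (G\<lparr>carrier := H\<rparr>)"
proof -
  interpret H: group "G\<lparr>carrier := H\<rparr>"
    using subgroup_imp_group[OF H] .
  have consistent: "(derived (G\<lparr>carrier := H\<rparr>) ^^ n) H = (derived G ^^ n) H" for n
  proof (induction n)
    case (Suc n)
    have "(derived G ^^ n) H \<subseteq> H"
      using H.exp_of_derived_in_carrier[of H n] Suc by simp
    then show ?case
      using Suc derived_consistent[OF _ H] by simp
  qed simp
  obtain n where "(derived G ^^ n) (carrier G) = {\<one>}"
    using assms(1) solvable_iff_trivial_derived_seq by blast
  then have "(derived G ^^ n) H = {\<one>}"
    using mono_exp_of_derived[OF subgroup.subset[OF H], of n]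
      subgroup.one_closed[OF exp_of_derived_is_subgroup[OF H, of n]] by auto
  then show ?thesis
    using H.solvable_iff_trivial_derived_seq consistent by auto
qed

lemma (in group) cauchy_theorem:
  assumes "finite (carrier G)" "Factorial_Ring.prime q" "q dvd order G"
  obtains a where "a \<in> carrier G" "a \<noteq> \<one>" "a [^] q = \<one>"
proof -
  obtain P where P: "subgroup P G" "card P = q"
    using sylow_thm[OF assms(2) is_group _ assms(1), of 1 "order G div q"] assms(3) by auto
  interpret P: group "G\<lparr>carrier := P\<rparr>"
    using subgroup_imp_group[OF P(1)] .
  have "card P > 1"
    using P(2) assms(2) prime_gt_1_nat by blast
  then have "P \<noteq> {\<one>}"
    by auto
  then obtain a where a: "a \<in> P" "a \<noteq> \<one>"
    using subgroup.one_closed[OF P(1)] by blast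
  have "a [^]\<^bsub>G\<lparr>carrier := P\<rparr>\<^esub> card P = \<one>"
    using P.pow_order_eq_1[of a] a(1) P(1) by (simp add: order_def)
  then have "a [^] q = \<one>"
    using P nat_pow_consistent by simp
  moreover have "a \<in> carrier G"
    using a(1) subgroup.subset[OF P(1)] by blast
  ultimately show thesis
    using that a(2) by blast
qed

lemma (in group) prime_dvd_order_eq_exponent:
  assumes "finite (carrier G)" "Factorial_Ring.prime r" "\<And>a. a \<in> carrier G \<Longrightarrow> a [^] r = \<one>"
    and "Factorial_Ring.prime q" "q dvd order G"
  shows "q = r"
proof -
  obtain a where a: "a \<in> carrier G" "a \<noteq> \<one>" "a [^] q = \<one>"
    using cauchy_theorem assms(1,4,5) by blast
  have "ord a \<noteq> 1"
    using a ord_eq_1 by blast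
  moreover have "ord a dvd q" "ord a dvd r"
    using a assms(3) pow_eq_id by auto
  ultimately have "ord a = q" "ord a = r"
    using prime_nat_iff[THEN iffD1, OF assms(4)] prime_nat_iff[THEN iffD1, OF assms(2)] by blast+
  then show ?thesis
    by simp
qed

lemma (in group) card_subgroup_ne_1:
  assumes "subgroup V G" "V \<noteq> {\<one>}"
  shows "card V \<noteq> 1"
proof
  assume "card V = 1"
  then obtain a where "V = {a}"
    by (rule card_1_singletonE)
  then show False
    using assms subgroup.one_closed by blast
qed

lemma (in group) prime_order_subgroup_eq_carrier:
  assumes p: "Factorial_Ring.prime (order G)" and V: "subgroup V G" "V \<noteq> {\<one>}"
  shows "V = carrier G"
proof -
  have "order G > 0"
    using p prime_gt_0_nat by blast
  then have fin: "finite (carrier G)"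
    by (simp add: order_gt_0_iff_finite)
  have "order G = card (rcosets V) * card V"
    using lagrange[OF V(1)] by simp
  then have "card V dvd order G"
    by simp
  then have "card V = 1 \<or> card V = order G"
    using prime_nat_iff[THEN iffD1, OF p] by blast
  moreover have "card V \<noteq> 1"
    using card_subgroup_ne_1[OF V] .
  ultimately show ?thesis
    using card_subset_eq[OF fin subgroup.subset[OF V(1)]] by (simp add: order_def)
qed

lemma (in group) abelian_exponent_subgroup:
  assumes A: "subgroup A G" and comm: "\<And>a b. a \<in> A \<Longrightarrow> b \<in> A \<Longrightarrow> a \<otimes> b = b \<otimes> a"
  shows "subgroup {a \<in> A. a [^] (n::nat) = \<one>} G"
proof (rule subgroupI)
  show "{a \<in> A. a [^] n = \<one>} \<subseteq> carrier G"
    using subgroup.subset[OF A] by auto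
  have "\<one> \<in> {a \<in> A. a [^] n = \<one>}"
    by (simp add: subgroup.one_closed[OF A])
  then show "{a \<in> A. a [^] n = \<one>} \<noteq> {}"
    by blast
next
  fix a assume "a \<in> {a \<in> A. a [^] n = \<one>}"
  then show "inv a \<in> {a \<in> A. a [^] n = \<one>}"
    using subgroup.subset[OF A] subgroup.m_inv_closed[OF A] by (auto simp: nat_pow_inv)
next
  fix a b assume ab: "a \<in> {a \<in> A. a [^] n = \<one>}" "b \<in> {a \<in> A. a [^] n = \<one>}"
  then have "a \<in> carrier G" "b \<in> carrier G" "a \<otimes> b = b \<otimes> a"
    using subgroup.subset[OF A] comm by auto
  then show "a \<otimes> b \<in> {a \<in> A. a [^] n = \<one>}"
    using ab subgroup.m_closed[OF A] by (simp add: pow_mult_distrib)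
qed

lemma (in group) abelian_normal_subgroup_imp_elementary:
  assumes fin: "finite (carrier G)" and A: "A \<lhd> G" "A \<noteq> {\<one>}"
    and comm: "\<And>a b. a \<in> A \<Longrightarrow> b \<in> A \<Longrightarrow> a \<otimes> b = b \<otimes> a"
  obtains r :: nat and E where "Factorial_Ring.prime r" "E \<lhd> G" "E \<subseteq> A" "E \<noteq> {\<one>}"
    "\<And>a. a \<in> E \<Longrightarrow> a [^] r = \<one>"
proof -
  interpret A: normal A G
    using A(1) .
  interpret AG: group "G\<lparr>carrier := A\<rparr>"
    using subgroup_imp_group[OF A.subgroup_axioms] .
  have "finite A"
    using fin A.subset finite_subset by blast
  have "card A \<noteq> 1"
    using card_subgroup_ne_1[OF A.subgroup_axioms A(2)] .
  then obtain r where r: "Factorial_Ring.prime r" "r dvd card A"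
    using prime_factor_nat by blast
  define E where "E = {a \<in> A. a [^] r = \<one>}"
  have "subgroup E G"
    unfolding E_def using abelian_exponent_subgroup[OF A.subgroup_axioms comm] .
  moreover have "x \<otimes> a \<otimes> inv x \<in> E" if "x \<in> carrier G" "a \<in> E" for x a
    using that A.subset A.inv_op_closed2 by (auto simp: E_def conj_nat_pow)
  ultimately have "E \<lhd> G"
    by (rule normal_invI)
  obtain e where "e \<in> A" "e \<noteq> \<one>" "e [^]\<^bsub>G\<lparr>carrier := A\<rparr>\<^esub> r = \<one>"
    using AG.cauchy_theorem \<open>finite A\<close> r by (auto simp: order_def)
  then have "e \<in> E"
    using A.subgroup_axioms nat_pow_consistent by (simp add: E_def)
  then have "E \<noteq> {\<one>}"
    using \<open>e \<noteq> \<one>\<close> by blast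
  show thesis
    by (rule that[OF r(1) \<open>E \<lhd> G\<close> _ \<open>E \<noteq> {\<one>}\<close>]) (auto simp: E_def)
qed

lemma (in group) solvable_imp_elementary_abelian_normal_subgroup:
  assumes "finite (carrier G)" "solvable G" "carrier G \<noteq> {\<one>}"
  obtains r :: nat and E where "Factorial_Ring.prime r" "E \<lhd> G" "E \<noteq> {\<one>}"
    "\<And>a b. a \<in> E \<Longrightarrow> b \<in> E \<Longrightarrow> a \<otimes> b = b \<otimes> a" "\<And>a. a \<in> E \<Longrightarrow> a [^] r = \<one>"
proof -
  obtain A where A: "A \<lhd> G" "A \<noteq> {\<one>}" "\<And>a b. a \<in> A \<Longrightarrow> b \<in> A \<Longrightarrow> a \<otimes> b = b \<otimes> a"
    using solvable_imp_abelian_normal_subgroup assms(2,3) by blast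
  obtain r :: nat and E where "Factorial_Ring.prime r" "E \<lhd> G" "E \<subseteq> A" "E \<noteq> {\<one>}"
    "\<And>a. a \<in> E \<Longrightarrow> a [^] r = \<one>"
    using abelian_normal_subgroup_imp_elementary[OF assms(1) A] by blast
  then show thesis
    using that A(3) by blast
qed

section \<open>Orbits and fixed points of group actions\<close>

lemma (in group_action) subgroup_action:
  assumes "subgroup K G"
  shows "group_action (G\<lparr>carrier := K\<rparr>) E \<phi>"
  unfolding group_action_def using group_hom.induced_group_hom'[OF group_hom assms] .

lemma (in group_action) commute_fixes_image:
  assumes "g \<in> carrier G" "a \<in> carrier G" "g \<otimes> a = a \<otimes> g" "x \<in> E" "\<phi> g x = x"
  shows "\<phi> g (\<phi> a x) = \<phi> a x"
  using composition_rule[OF assms(4,1,2)] composition_rule[OF assms(4,2,1)] assms(3,5) by simp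

lemma (in group_action) abelian_agree_on_orbit:
  assumes A: "subgroup A G" and comm: "\<And>a b. a \<in> A \<Longrightarrow> b \<in> A \<Longrightarrow> a \<otimes> b = b \<otimes> a"
    and ab: "a \<in> A" "b \<in> A" and x: "x \<in> E" "\<phi> a x = \<phi> b x" and c: "c \<in> A"
  shows "\<phi> a (\<phi> c x) = \<phi> b (\<phi> c x)"
proof -
  interpret group G
    using group_hom group_hom.axioms(1) by blast
  have carrier: "a \<in> carrier G" "b \<in> carrier G" "c \<in> carrier G"
    using ab c subgroup.subset[OF A] by auto
  define m where "m = inv b \<otimes> a"
  have "m \<in> A"
    unfolding m_def using ab A by (simp add: subgroup.m_closed subgroup.m_inv_closed)
  have "\<phi> m x = x"
    unfolding m_def using carrier x composition_rule orbit_sym_aux by simp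
  then have "\<phi> m (\<phi> c x) = \<phi> c x"
    using commute_fixes_image \<open>m \<in> A\<close> c comm subgroup.subset[OF A] x(1) by blast
  moreover have "a = b \<otimes> m"
    unfolding m_def using carrier by (simp add: mult_inv_cancel_left)
  moreover have "\<phi> c x \<in> E"
    using carrier x element_image by blast
  ultimately show ?thesis
    using carrier \<open>m \<in> A\<close> subgroup.subset[OF A] composition_rule by auto
qed

lemma (in group_action) prime_dvd_card_orbit:
  assumes primes: "\<And>q. Factorial_Ring.prime q \<Longrightarrow> q dvd order G \<Longrightarrow> q = r"
    and x: "x \<in> E" "orbit G \<phi> x \<noteq> {x}"
  shows "r dvd card (orbit G \<phi> x)"
proof -
  have "card (orbit G \<phi> x) dvd order G"
    using orbit_stabilizer_theorem[OF x(1)] by (metis dvd_triv_left)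
  moreover have "card (orbit G \<phi> x) \<noteq> 1"
  proof
    assume "card (orbit G \<phi> x) = 1"
    then obtain z where "orbit G \<phi> x = {z}"
      by (rule card_1_singletonE)
    then show False
      using x orbit_refl[OF x(1)] by auto
  qed
  then obtain q where "Factorial_Ring.prime q" "q dvd card (orbit G \<phi> x)"
    using prime_factor_nat by blast
  ultimately show ?thesis
    using primes dvd_trans by metis
qed

lemma (in group_action) orbit_of_fixed_point:
  assumes "x \<in> E" "\<And>g. g \<in> carrier G \<Longrightarrow> \<phi> g x = x"
  shows "orbit G \<phi> x = {x}"
  using assms orbit_refl[OF assms(1)] by (auto simp: orbit_def)

lemma (in group_action) card_fixed_points_cong:
  assumes fin: "finite E"
    and primes: "\<And>q. Factorial_Ring.prime q \<Longrightarrow> q dvd order G \<Longrightarrow> q = r"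
  shows "r dvd card E - card {x \<in> E. \<forall>g \<in> carrier G. \<phi> g x = x}"
proof -
  define F where "F = {x \<in> E. \<forall>g \<in> carrier G. \<phi> g x = x}"
  have "r dvd (\<Sum>z\<in>orb. of_bool (z \<notin> F) :: nat)" if orb: "orb \<in> orbits G E \<phi>" for orb
  proof -
    obtain x where x: "x \<in> E" "orb = orbit G \<phi> x"
      using orb unfolding orbits_def by blast
    have orb_sub: "orb \<subseteq> E"
      using x element_image by (auto simp: orbit_def)
    then have orb_fin: "finite orb"
      using fin finite_subset by blast
    show ?thesis
    proof (cases "x \<in> F")
      case True
      then show ?thesis
        using x orbit_of_fixed_point by (simp add: F_def)
    next
      case False
      have "z \<notin> F" if "z \<in> orb" for z
      proof
        assume "z \<in> F"
        moreover have "x \<in> orbit G \<phi> z"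
          using x orb_sub orbit_sym that by blast
        ultimately show False
          using False orbit_of_fixed_point[of z] by (simp add: F_def)
      qed
      then have "orb \<inter> {z. z \<notin> F} = orb"
        by blast
      moreover obtain g where "g \<in> carrier G" "\<phi> g x \<noteq> x"
        using False x(1) by (auto simp: F_def)
      then have "orbit G \<phi> x \<noteq> {x}"
        by (auto simp: orbit_def)
      then have "r dvd card orb"
        using prime_dvd_card_orbit[OF primes x(1)] x(2) by blast
      ultimately show ?thesis
        using orb_fin by simp
    qed
  qed
  then have "r dvd (\<Sum>orb\<in>orbits G E \<phi>. \<Sum>z\<in>orb. of_bool (z \<notin> F) :: nat)"
    by (rule dvd_sum)
  also have "\<dots> = (\<Sum>z\<in>E. of_bool (z \<notin> F))"
    by (rule disjoint_sum[OF fin])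
  also have "\<dots> = card (E - F)"
    using fin by (simp add: Diff_eq Compl_eq)
  also have "\<dots> = card E - card F"
    using fin by (simp add: F_def card_Diff_subset)
  finally show ?thesis
    unfolding F_def .
qed

lemma (in group_action) transitive_on_complement_of_unique_fixed_point:
  assumes fin: "finite E"
    and r: "Factorial_Ring.prime r" and primes: "\<And>q. Factorial_Ring.prime q \<Longrightarrow> q dvd order G \<Longrightarrow> q = r"
    and x: "x \<in> E" "{y \<in> E. \<forall>g \<in> carrier G. \<phi> g y = y} = {x}"
    and p: "Factorial_Ring.prime (card E - 1)" and y: "y \<in> E - {x}"
  shows "orbit G \<phi> y = E - {x}"
proof -
  have "r dvd card E - 1"
    using card_fixed_points_cong[OF fin primes] x(2) by simp
  then have "r = 1 \<or> r = card E - 1"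
    using prime_nat_iff[THEN iffD1, OF p] by blast
  then have r_eq: "r = card (E - {x})"
    using r x(1) fin by auto
  have "x \<notin> orbit G \<phi> y"
  proof
    assume "x \<in> orbit G \<phi> y"
    then have "y \<in> orbit G \<phi> x"
      using orbit_sym x(1) y by blast
    then show False
      using orbit_of_fixed_point[OF x(1)] x(2) y by blast
  qed
  then have sub: "orbit G \<phi> y \<subseteq> E - {x}"
    using element_image y by (auto simp: orbit_def)
  obtain g where "g \<in> carrier G" "\<phi> g y \<noteq> y"
    using x(2) y by blast
  then have "orbit G \<phi> y \<noteq> {y}"
    by (auto simp: orbit_def)
  then have "r dvd card (orbit G \<phi> y)"
    using prime_dvd_card_orbit[OF primes] y by blast
  moreover have "card (orbit G \<phi> y) > 0"
    using sub fin orbit_refl y by (auto simp: card_gt_0_iff dest: finite_subset)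
  ultimately have "card (E - {x}) \<le> card (orbit G \<phi> y)"
    using r_eq dvd_imp_le by blast
  then show ?thesis
    using card_seteq[OF _ sub] fin by blast
qed

section \<open>Permutation groups\<close>

locale perm_group =
  fixes \<Omega> :: "'a set" and G :: "('a \<Rightarrow> 'a) set"
  assumes subgroup_BijGroup: "subgroup G (BijGroup \<Omega>)"
begin

abbreviation B where "B \<equiv> BijGroup \<Omega>"

sublocale B: group B
  by (rule group_BijGroup)

sublocale group_action B \<Omega> "\<lambda>g. g"
  unfolding group_action_def group_hom_def group_hom_axioms_def hom_def
  using B.is_group by simp

lemma in_carrier: "g \<in> G \<Longrightarrow> g \<in> carrier B"
  using subgroup.subset[OF subgroup_BijGroup] by blast

lemma finite_carrier:
  assumes "finite \<Omega>"
  shows "finite (carrier B)"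
proof (rule finite_subset)
  show "carrier B \<subseteq> extensional_funcset \<Omega> \<Omega>"
  proof
    fix f assume "f \<in> carrier B"
    then have "f \<in> Bij \<Omega>"
      by (simp add: BijGroup_def)
    then show "f \<in> extensional_funcset \<Omega> \<Omega>"
      unfolding PiE_def using Bij_imp_funcset Bij_imp_extensional by blast
  qed
  show "finite (extensional_funcset \<Omega> \<Omega>)"
    using assms by (simp add: finite_PiE)
qed

lemma mult_apply: "g \<in> carrier B \<Longrightarrow> h \<in> carrier B \<Longrightarrow> y \<in> \<Omega> \<Longrightarrow> (g \<otimes>\<^bsub>B\<^esub> h) y = g (h y)"
  by (rule composition_rule)

lemma one_apply: "y \<in> \<Omega> \<Longrightarrow> \<one>\<^bsub>B\<^esub> y = y"
  by (simp add: BijGroup_def)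

lemma inv_apply: "g \<in> carrier B \<Longrightarrow> y \<in> \<Omega> \<Longrightarrow> (inv\<^bsub>B\<^esub> g) (g y) = y"
  using orbit_sym_aux by simp

lemma apply_inv: "g \<in> carrier B \<Longrightarrow> y \<in> \<Omega> \<Longrightarrow> g ((inv\<^bsub>B\<^esub> g) y) = y"
  using inv_apply[of "inv\<^bsub>B\<^esub> g" y] by simp

lemma apply_in: "g \<in> carrier B \<Longrightarrow> y \<in> \<Omega> \<Longrightarrow> g y \<in> \<Omega>"
  using element_image by simp

lemma eq_if_agree:
  assumes "g \<in> carrier B" "h \<in> carrier B" "\<And>y. y \<in> \<Omega> \<Longrightarrow> g y = h y"
  shows "g = h"
proof -
  have "g \<in> Bij \<Omega>" "h \<in> Bij \<Omega>"
    using assms(1,2) by (simp_all add: BijGroup_def)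
  then show ?thesis
    using extensionalityI[OF Bij_imp_extensional Bij_imp_extensional, of g \<Omega> h] assms(3) by blast
qed

lemma eq_one_if_fixes_all:
  assumes "g \<in> carrier B" "\<And>y. y \<in> \<Omega> \<Longrightarrow> g y = y"
  shows "g = \<one>\<^bsub>B\<^esub>"
  using eq_if_agree[OF assms(1) B.one_closed] assms(2) one_apply by simp

lemma transitive_perm_groupI:
  assumes U: "subgroup U B" and x: "x \<in> \<Omega>" and onto: "\<And>y. y \<in> \<Omega> \<Longrightarrow> \<exists>u\<in>U. u x = y"
  shows "transitive_perm_group \<Omega> U"
  unfolding transitive_perm_group_def
proof (intro ballI)
  fix y z assume yz: "y \<in> \<Omega>" "z \<in> \<Omega>"
  then obtain u v where uv: "u \<in> U" "u x = y" "v \<in> U" "v x = z"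
    using onto by metis
  have "u \<in> carrier B" "v \<in> carrier B"
    using uv subgroup.subset[OF U] by auto
  moreover have "(inv\<^bsub>B\<^esub> u) y = x"
    using inv_apply uv x \<open>u \<in> carrier B\<close> by blast
  ultimately have "(v \<otimes>\<^bsub>B\<^esub> inv\<^bsub>B\<^esub> u) y = z"
    using uv yz by (simp add: mult_apply)
  moreover have "v \<otimes>\<^bsub>B\<^esub> inv\<^bsub>B\<^esub> u \<in> U"
    using uv U by (simp add: subgroup.m_closed subgroup.m_inv_closed)
  ultimately show "\<exists>w\<in>U. w y = z"
    by blast
qed

lemma point_stabilizer_subgroup:
  assumes "x \<in> \<Omega>"
  shows "subgroup {g \<in> G. g x = x} B"
proof -
  have "{g \<in> G. g x = x} = G \<inter> stabilizer B (\<lambda>g. g) x"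
    using in_carrier by (auto simp: stabilizer_def)
  then show ?thesis
    using B.subgroups_Inter_pair[OF subgroup_BijGroup stabilizer_subgroup[OF assms]] by simp
qed

lemma normal_subgroup_of_restriction:
  assumes S: "subgroup S B" and E: "E \<lhd> B\<lparr>carrier := S\<rparr>"
  shows "subgroup E B" "E \<subseteq> S"
    "\<And>s k. s \<in> S \<Longrightarrow> k \<in> E \<Longrightarrow> s \<otimes>\<^bsub>B\<^esub> k \<otimes>\<^bsub>B\<^esub> inv\<^bsub>B\<^esub> s \<in> E"
  using B.incl_subgroup[OF S normal_imp_subgroup[OF E]] subgroup.subset[OF normal_imp_subgroup[OF E]]
    B.normal_in_subgroup_conj_closed[OF S E] by auto

lemma primitive_stabilizer_maximal:
  assumes prim: "primitive_perm_group \<Omega> G" and x: "x \<in> \<Omega>"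
    and K: "subgroup K B" "{g \<in> G. g x = x} \<subseteq> K" "K \<subseteq> G"
  shows "K = {g \<in> G. g x = x} \<or> K = G"
proof -
  have "subgroup K (perm_subgroup \<Omega> G)"
    using B.subgroup_incl[OF K(1) subgroup_BijGroup K(3)] .
  moreover have "maximal_subgroup {g \<in> G. g x = x} (perm_subgroup \<Omega> G)"
    using prim x unfolding primitive_perm_group_def by (simp add: stabilizer_def)
  ultimately show ?thesis
    using K(2) unfolding maximal_subgroup_def by simp
qed

lemma primitive_normalized_by_stabilizer:
  assumes prim: "primitive_perm_group \<Omega> G" and x: "x \<in> \<Omega>"
    and U: "subgroup U B" "U \<subseteq> G"
    and conj: "\<And>s u. s \<in> G \<Longrightarrow> s x = x \<Longrightarrow> u \<in> U \<Longrightarrow> s \<otimes>\<^bsub>B\<^esub> u \<otimes>\<^bsub>B\<^esub> inv\<^bsub>B\<^esub> s \<in> U"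
  shows "U \<subseteq> {g \<in> G. g x = x} \<or> transitive_perm_group \<Omega> U"
proof -
  let ?S = "{g \<in> G. g x = x}"
  let ?K = "U <#>\<^bsub>B\<^esub> ?S"
  have S: "subgroup ?S B"
    using point_stabilizer_subgroup[OF x] .
  have "subgroup ?K B"
    using B.set_mult_subgroup[OF U(1) S] conj by blast
  moreover have "?S \<subseteq> ?K"
    using B.subgroups_subset_set_mult[OF U(1) S] by blast
  moreover have "?K \<subseteq> G"
    using mono_set_mult[of U G ?S G B] U(2) B.subgroup_mult_id[OF subgroup_BijGroup] by auto
  ultimately have "?K = ?S \<or> ?K = G"
    using primitive_stabilizer_maximal[OF prim x] by blast
  then show ?thesis
  proof
    assume "?K = ?S"
    then have "U \<subseteq> ?S"
      using B.subgroups_subset_set_mult[OF U(1) S] by blast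
    then show ?thesis
      by (rule disjI1)
  next
    assume KG: "?K = G"
    have "\<exists>u\<in>U. u x = y" if y: "y \<in> \<Omega>" for y
    proof -
      obtain h where h: "h \<in> G" "h x = y"
        using prim x y unfolding primitive_perm_group_def transitive_perm_group_def by blast
      then obtain u s where us: "u \<in> U" "s \<in> ?S" "h = u \<otimes>\<^bsub>B\<^esub> s"
        using KG unfolding set_mult_def by blast
      then have "h x = u x"
        using U(2) in_carrier x by (auto simp: mult_apply)
      then show ?thesis
        using us(1) h(2) by auto
    qed
    then have "transitive_perm_group \<Omega> U"
      by (rule transitive_perm_groupI[OF U(1) x])
    then show ?thesis
      by (rule disjI2)
  qed
qed

lemma normal_subgroup_in_stabilizer_trivial:
  assumes tr: "transitive_perm_group \<Omega> G" and x: "x \<in> \<Omega>"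
    and N: "N \<subseteq> G" "\<And>g n. g \<in> G \<Longrightarrow> n \<in> N \<Longrightarrow> g \<otimes>\<^bsub>B\<^esub> n \<otimes>\<^bsub>B\<^esub> inv\<^bsub>B\<^esub> g \<in> N"
    and NS: "N \<subseteq> {g \<in> G. g x = x}" and n: "n \<in> N"
  shows "n = \<one>\<^bsub>B\<^esub>"
proof (rule eq_one_if_fixes_all)
  show nB: "n \<in> carrier B"
    using n N(1) in_carrier by blast
  fix y assume y: "y \<in> \<Omega>"
  obtain h where h: "h \<in> G" "h x = y"
    using tr x y unfolding transitive_perm_group_def by blast
  have hB: "h \<in> carrier B" "inv\<^bsub>B\<^esub> h \<in> G"
    using h(1) in_carrier subgroup.m_inv_closed[OF subgroup_BijGroup] by auto
  then have "inv\<^bsub>B\<^esub> h \<otimes>\<^bsub>B\<^esub> n \<otimes>\<^bsub>B\<^esub> h \<in> N"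
    using N(2)[OF _ n] by fastforce
  then have "(inv\<^bsub>B\<^esub> h \<otimes>\<^bsub>B\<^esub> n \<otimes>\<^bsub>B\<^esub> h) x = x"
    using NS by blast
  then have "(inv\<^bsub>B\<^esub> h) (n y) = x"
    using hB nB x y h(2) by (simp add: mult_apply apply_in)
  then show "n y = y"
    using apply_inv[OF hB(1) apply_in[OF nB y]] h(2) by simp
qed

lemma primitive_normal_subgroup_transitive:
  assumes prim: "primitive_perm_group \<Omega> G"
    and N: "subgroup N B" "N \<subseteq> G" "N \<noteq> {\<one>\<^bsub>B\<^esub>}"
      "\<And>g n. g \<in> G \<Longrightarrow> n \<in> N \<Longrightarrow> g \<otimes>\<^bsub>B\<^esub> n \<otimes>\<^bsub>B\<^esub> inv\<^bsub>B\<^esub> g \<in> N"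
  shows "transitive_perm_group \<Omega> N"
proof (cases "\<Omega> = {}")
  case True
  then show ?thesis
    by (simp add: transitive_perm_group_def)
next
  case False
  then obtain x where x: "x \<in> \<Omega>"
    by blast
  have "transitive_perm_group \<Omega> G"
    using prim by (simp add: primitive_perm_group_def)
  then have "\<not> N \<subseteq> {g \<in> G. g x = x}"
    using normal_subgroup_in_stabilizer_trivial[OF _ x N(2,4)] N(3) subgroup.one_closed[OF N(1)]
    by blast
  then show ?thesis
    using primitive_normalized_by_stabilizer[OF prim x N(1,2)] N(4) by blast
qed

lemma primitive_solvable_abelian_normal_subgroup:
  assumes prim: "primitive_perm_group \<Omega> G" and solv: "solvable (perm_subgroup \<Omega> G)"
    and nontrivial: "G \<noteq> {\<one>\<^bsub>B\<^esub>}"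
  obtains N where "subgroup N B" "N \<subseteq> G"
    "\<And>g n. g \<in> G \<Longrightarrow> n \<in> N \<Longrightarrow> g \<otimes>\<^bsub>B\<^esub> n \<otimes>\<^bsub>B\<^esub> inv\<^bsub>B\<^esub> g \<in> N"
    "\<And>a b. a \<in> N \<Longrightarrow> b \<in> N \<Longrightarrow> a \<otimes>\<^bsub>B\<^esub> b = b \<otimes>\<^bsub>B\<^esub> a" "transitive_perm_group \<Omega> N"
proof -
  obtain N where N: "N \<lhd> perm_subgroup \<Omega> G" "N \<noteq> {\<one>\<^bsub>B\<^esub>}"
    "\<And>a b. a \<in> N \<Longrightarrow> b \<in> N \<Longrightarrow> a \<otimes>\<^bsub>B\<^esub> b = b \<otimes>\<^bsub>B\<^esub> a"
    using group.solvable_imp_abelian_normal_subgroup[OF B.subgroup_imp_group[OF subgroup_BijGroup] solv]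
      nontrivial by auto
  note N' = normal_subgroup_of_restriction[OF subgroup_BijGroup N(1)]
  show thesis
    using that[OF N'(1,2) N'(3) N(3)] primitive_normal_subgroup_transitive[OF prim N'(1,2) N(2) N'(3)]
    by blast
qed

lemma abelian_transitive_eq_if_agree:
  assumes A: "subgroup A B" "\<And>a b. a \<in> A \<Longrightarrow> b \<in> A \<Longrightarrow> a \<otimes>\<^bsub>B\<^esub> b = b \<otimes>\<^bsub>B\<^esub> a"
      "\<Delta> \<subseteq> \<Omega>" "transitive_perm_group \<Delta> A"
    and ab: "a \<in> A" "b \<in> A" and x: "x \<in> \<Delta>" "a x = b x"
    and outside: "\<And>y. y \<in> \<Omega> - \<Delta> \<Longrightarrow> a y = b y"
  shows "a = b"
proof (rule eq_if_agree)
  show "a \<in> carrier B" "b \<in> carrier B"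
    using ab subgroup.subset[OF A(1)] by auto
  fix y assume y: "y \<in> \<Omega>"
  show "a y = b y"
  proof (cases "y \<in> \<Delta>")
    case True
    then obtain c where "c \<in> A" "c x = y"
      using A(4) x(1) unfolding transitive_perm_group_def by blast
    then show ?thesis
      using abelian_agree_on_orbit[OF A(1,2) ab _ x(2)] A(3) x(1) by blast
  next
    case False
    then show ?thesis
      using outside y by blast
  qed
qed

lemma eq_one_if_commutes_with_transitive:
  assumes U: "U \<subseteq> carrier B" "transitive_perm_group \<Omega> U"
    and k: "k \<in> carrier B" "\<And>u. u \<in> U \<Longrightarrow> k \<otimes>\<^bsub>B\<^esub> u = u \<otimes>\<^bsub>B\<^esub> k"
    and x: "x \<in> \<Omega>" "k x = x"
  shows "k = \<one>\<^bsub>B\<^esub>"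
proof (rule eq_one_if_fixes_all[OF k(1)])
  fix y assume "y \<in> \<Omega>"
  then obtain u where "u \<in> U" "u x = y"
    using U(2) x(1) unfolding transitive_perm_group_def by blast
  then show "k y = y"
    using commute_fixes_image[OF k(1) _ k(2) x] U(1) by blast
qed

lemma commute_if_fixes_image:
  assumes N: "subgroup N B" "N \<subseteq> G" "\<And>g n. g \<in> G \<Longrightarrow> n \<in> N \<Longrightarrow> g \<otimes>\<^bsub>B\<^esub> n \<otimes>\<^bsub>B\<^esub> inv\<^bsub>B\<^esub> g \<in> N"
      "\<And>a b. a \<in> N \<Longrightarrow> b \<in> N \<Longrightarrow> a \<otimes>\<^bsub>B\<^esub> b = b \<otimes>\<^bsub>B\<^esub> a" "transitive_perm_group \<Omega> N"
    and k: "k \<in> G" "k x = x" and x: "x \<in> \<Omega>" and n: "n \<in> N" "k (n x) = n x"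
  shows "k \<otimes>\<^bsub>B\<^esub> n = n \<otimes>\<^bsub>B\<^esub> k"
proof -
  have kB: "k \<in> carrier B" and nB: "n \<in> carrier B"
    using k(1) n(1) N(2) in_carrier by auto
  have "(inv\<^bsub>B\<^esub> k) x = x"
    using inv_apply[OF kB x] k(2) by simp
  then have "(k \<otimes>\<^bsub>B\<^esub> n \<otimes>\<^bsub>B\<^esub> inv\<^bsub>B\<^esub> k) x = n x"
    using kB nB x n(2) by (simp add: mult_apply)
  then have "k \<otimes>\<^bsub>B\<^esub> n \<otimes>\<^bsub>B\<^esub> inv\<^bsub>B\<^esub> k = n"
    using abelian_transitive_eq_if_agree[OF N(1,4) subset_refl N(5) N(3)[OF k(1) n(1)] n(1) x]
    by blast
  then show ?thesis
    using B.inv_solve_right'[of n "k \<otimes>\<^bsub>B\<^esub> n" k] kB nB by simp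
qed

lemma normal_subgroup_of_stabilizer_fixes_only_base_point:
  assumes prim: "primitive_perm_group \<Omega> G" and x: "x \<in> \<Omega>"
    and N: "subgroup N B" "N \<subseteq> G" "\<And>g n. g \<in> G \<Longrightarrow> n \<in> N \<Longrightarrow> g \<otimes>\<^bsub>B\<^esub> n \<otimes>\<^bsub>B\<^esub> inv\<^bsub>B\<^esub> g \<in> N"
      "\<And>a b. a \<in> N \<Longrightarrow> b \<in> N \<Longrightarrow> a \<otimes>\<^bsub>B\<^esub> b = b \<otimes>\<^bsub>B\<^esub> a" "transitive_perm_group \<Omega> N"
    and K: "subgroup K B" "K \<subseteq> {g \<in> G. g x = x}" "K \<noteq> {\<one>\<^bsub>B\<^esub>}"
      "\<And>s k. s \<in> {g \<in> G. g x = x} \<Longrightarrow> k \<in> K \<Longrightarrow> s \<otimes>\<^bsub>B\<^esub> k \<otimes>\<^bsub>B\<^esub> inv\<^bsub>B\<^esub> s \<in> K"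
    and y: "y \<in> \<Omega>" "\<And>k. k \<in> K \<Longrightarrow> k y = y"
  shows "y = x"
proof -
  let ?S = "{g \<in> G. g x = x}"
  have KB: "K \<subseteq> carrier B"
    using K(2) in_carrier by blast
  define U where "U = N \<inter> centralizer B K"
  have U: "subgroup U B" "U \<subseteq> G"
    unfolding U_def using B.subgroups_Inter_pair[OF N(1) B.centralizer_subgroup[OF KB]] N(2)
    by auto
  have "s \<otimes>\<^bsub>B\<^esub> u \<otimes>\<^bsub>B\<^esub> inv\<^bsub>B\<^esub> s \<in> U" if "s \<in> G" "s x = x" "u \<in> U" for s u
    using that N(3) B.centralizer_conj_closed[OF point_stabilizer_subgroup[OF x] KB K(4)]
    unfolding U_def by simp
  then have "U \<subseteq> ?S \<or> transitive_perm_group \<Omega> U"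
    using primitive_normalized_by_stabilizer[OF prim x U] by blast
  moreover have "\<not> transitive_perm_group \<Omega> U"
  proof
    assume "transitive_perm_group \<Omega> U"
    moreover obtain k where k: "k \<in> K" "k \<noteq> \<one>\<^bsub>B\<^esub>"
      using K(3) subgroup.one_closed[OF K(1)] by blast
    moreover have "k \<otimes>\<^bsub>B\<^esub> u = u \<otimes>\<^bsub>B\<^esub> k" if "u \<in> U" for u
      using that k(1) unfolding U_def centralizer_def by simp
    ultimately show False
      using eq_one_if_commutes_with_transitive[of U k x] U(2) in_carrier KB K(2) x by blast
  qed
  ultimately have US: "U \<subseteq> ?S"
    by blast
  obtain n where n: "n \<in> N" "n x = y"
    using N(5) x y(1) unfolding transitive_perm_group_def by blast
  have "k \<otimes>\<^bsub>B\<^esub> n = n \<otimes>\<^bsub>B\<^esub> k" if "k \<in> K" for k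
    using commute_if_fixes_image[OF N, of k x n] that K(2) x n y(2) by auto
  then have "n \<in> U"
    unfolding U_def centralizer_def using n(1) N(2) in_carrier by auto
  then show "y = x"
    using US n(2) by auto
qed

lemma stabilizer_elementary_abelian_normal_subgroup:
  assumes fin: "finite \<Omega>" and solv: "solvable (perm_subgroup \<Omega> G)" and x: "x \<in> \<Omega>"
    and nontrivial: "{g \<in> G. g x = x} \<noteq> {\<one>\<^bsub>B\<^esub>}"
  obtains r :: nat and E where "Factorial_Ring.prime r" "subgroup E B" "E \<subseteq> {g \<in> G. g x = x}"
    "E \<noteq> {\<one>\<^bsub>B\<^esub>}"
    "\<And>s k. s \<in> {g \<in> G. g x = x} \<Longrightarrow> k \<in> E \<Longrightarrow> s \<otimes>\<^bsub>B\<^esub> k \<otimes>\<^bsub>B\<^esub> inv\<^bsub>B\<^esub> s \<in> E"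
    "\<And>a b. a \<in> E \<Longrightarrow> b \<in> E \<Longrightarrow> a \<otimes>\<^bsub>B\<^esub> b = b \<otimes>\<^bsub>B\<^esub> a" "\<And>a. a \<in> E \<Longrightarrow> a [^]\<^bsub>B\<^esub> r = \<one>\<^bsub>B\<^esub>"
proof -
  let ?S = "{g \<in> G. g x = x}"
  have S: "subgroup ?S B"
    using point_stabilizer_subgroup[OF x] .
  interpret S: group "B\<lparr>carrier := ?S\<rparr>"
    using B.subgroup_imp_group[OF S] .
  have "subgroup ?S (perm_subgroup \<Omega> G)"
    using B.subgroup_incl[OF S subgroup_BijGroup] by auto
  then have "solvable ((perm_subgroup \<Omega> G)\<lparr>carrier := ?S\<rparr>)"
    by (rule group.solvable_imp_subgroup_solvable[OF B.subgroup_imp_group[OF subgroup_BijGroup] solv])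
  then have "solvable (B\<lparr>carrier := ?S\<rparr>)"
    by simp
  moreover have "finite ?S"
    by (rule finite_subset[OF _ finite_carrier[OF fin]]) (use in_carrier in blast)
  ultimately obtain r :: nat and E where E: "Factorial_Ring.prime r" "E \<lhd> B\<lparr>carrier := ?S\<rparr>"
    "E \<noteq> {\<one>\<^bsub>B\<^esub>}" "\<And>a b. a \<in> E \<Longrightarrow> b \<in> E \<Longrightarrow> a \<otimes>\<^bsub>B\<^esub> b = b \<otimes>\<^bsub>B\<^esub> a"
    "\<And>a. a \<in> E \<Longrightarrow> a [^]\<^bsub>B\<lparr>carrier := ?S\<rparr>\<^esub> r = \<one>\<^bsub>B\<^esub>"
    using S.solvable_imp_elementary_abelian_normal_subgroup nontrivial by auto
  note E' = normal_subgroup_of_restriction[OF S E(2)]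
  have "a [^]\<^bsub>B\<^esub> r = \<one>\<^bsub>B\<^esub>" if "a \<in> E" for a
    using E(5)[OF that] by (simp add: B.nat_pow_consistent[symmetric])
  then show thesis
    using that[OF E(1) E'(1,2) E(3) E'(3) E(4)] by blast
qed

lemma elementary_abelian_transitive_on_complement:
  fixes r :: nat
  assumes fin: "finite \<Omega>" and x: "x \<in> \<Omega>" and p: "Factorial_Ring.prime (card \<Omega> - 1)"
    and E: "subgroup E B" "Factorial_Ring.prime r" "\<And>a. a \<in> E \<Longrightarrow> a [^]\<^bsub>B\<^esub> r = \<one>\<^bsub>B\<^esub>"
      "{y \<in> \<Omega>. \<forall>k\<in>E. k y = y} = {x}"
  shows "transitive_perm_group (\<Omega> - {x}) E"
proof -
  interpret E: group_action "B\<lparr>carrier := E\<rparr>" \<Omega> "\<lambda>g. g"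
    using subgroup_action[OF E(1)] .
  interpret Eg: group "B\<lparr>carrier := E\<rparr>"
    using B.subgroup_imp_group[OF E(1)] .
  have finE: "finite E"
    using finite_carrier[OF fin] subgroup.subset[OF E(1)] finite_subset by blast
  have "a [^]\<^bsub>B\<lparr>carrier := E\<rparr>\<^esub> r = \<one>\<^bsub>B\<^esub>" if "a \<in> E" for a
    using E(3)[OF that] by (simp add: B.nat_pow_consistent[symmetric])
  then have primes: "q = r" if "Factorial_Ring.prime q" "q dvd order (B\<lparr>carrier := E\<rparr>)" for q
    using Eg.prime_dvd_order_eq_exponent[of r q] finE E(2) that by auto
  have orbit: "orbit (B\<lparr>carrier := E\<rparr>) (\<lambda>g. g) y = \<Omega> - {x}" if "y \<in> \<Omega> - {x}" for y
    using E.transitive_on_complement_of_unique_fixed_point[OF fin E(2) primes x _ p that] E(4)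
    by simp
  show ?thesis
    unfolding transitive_perm_group_def
  proof (intro ballI)
    fix y z assume "y \<in> \<Omega> - {x}" "z \<in> \<Omega> - {x}"
    then have "z \<in> orbit (B\<lparr>carrier := E\<rparr>) (\<lambda>g. g) y"
      using orbit by blast
    then show "\<exists>k\<in>E. k y = z"
      by (auto simp: orbit_def)
  qed
qed

lemma abelian_regular_on_complement:
  assumes x: "x \<in> \<Omega>"
    and K: "subgroup K B" "\<And>a b. a \<in> K \<Longrightarrow> b \<in> K \<Longrightarrow> a \<otimes>\<^bsub>B\<^esub> b = b \<otimes>\<^bsub>B\<^esub> a"
      "\<And>k. k \<in> K \<Longrightarrow> k x = x" "transitive_perm_group (\<Omega> - {x}) K"
    and y: "y \<in> \<Omega> - {x}"
  shows "bij_betw (\<lambda>k. k y) K (\<Omega> - {x})"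
proof (rule bij_betw_imageI)
  have KB: "K \<subseteq> carrier B"
    using subgroup.subset[OF K(1)] .
  show "inj_on (\<lambda>k. k y) K"
  proof (rule inj_onI)
    fix a b assume ab: "a \<in> K" "b \<in> K" "a y = b y"
    have "a w = b w" if "w \<in> \<Omega> - (\<Omega> - {x})" for w
      using that K(3)[OF ab(1)] K(3)[OF ab(2)] by auto
    then show "a = b"
      using abelian_transitive_eq_if_agree[OF K(1,2) Diff_subset K(4) ab(1,2) y ab(3)] by blast
  qed
  have "k y \<in> \<Omega> - {x}" if k: "k \<in> K" for k
  proof -
    have "k y \<noteq> k x"
      using inj_prop[of k] k KB x y unfolding inj_on_def by blast
    then show ?thesis
      using K(3)[OF k] apply_in k KB y by auto
  qed
  moreover have "z \<in> (\<lambda>k. k y) ` K" if z: "z \<in> \<Omega> - {x}" for z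
  proof -
    obtain k where "k \<in> K" "k y = z"
      using K(4) y z unfolding transitive_perm_group_def by blast
    then show ?thesis
      by blast
  qed
  ultimately show "(\<lambda>k. k y) ` K = \<Omega> - {x}"
    by blast
qed

lemma commute_if_normalizes_and_fixes_two_points:
  assumes fin: "finite \<Omega>" and x: "x \<in> \<Omega>" and p: "Factorial_Ring.prime (card \<Omega> - 1)"
    and K: "subgroup K B" "\<And>a b. a \<in> K \<Longrightarrow> b \<in> K \<Longrightarrow> a \<otimes>\<^bsub>B\<^esub> b = b \<otimes>\<^bsub>B\<^esub> a"
      "\<And>k. k \<in> K \<Longrightarrow> k x = x" "transitive_perm_group (\<Omega> - {x}) K"
    and g: "g \<in> carrier B" "\<And>k. k \<in> K \<Longrightarrow> g \<otimes>\<^bsub>B\<^esub> k \<otimes>\<^bsub>B\<^esub> inv\<^bsub>B\<^esub> g \<in> K"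
    and fixed: "y \<in> \<Omega> - {x}" "z \<in> \<Omega> - {x}" "y \<noteq> z" "g y = y" "g z = z"
    and k: "k \<in> K"
  shows "g \<otimes>\<^bsub>B\<^esub> k = k \<otimes>\<^bsub>B\<^esub> g"
proof -
  have KB: "K \<subseteq> carrier B"
    using subgroup.subset[OF K(1)] .
  have bij: "bij_betw (\<lambda>k. k y) K (\<Omega> - {x})"
    by (rule abelian_regular_on_complement[OF x K(1)]) (use K fixed(1) in auto)
  obtain b where b: "b \<in> K" "b y = z"
    using K(4) fixed(1,2) unfolding transitive_perm_group_def by blast
  have "(inv\<^bsub>B\<^esub> g) y = y"
    using inv_apply[OF g(1), of y] fixed(1,4) by simp
  then have "(g \<otimes>\<^bsub>B\<^esub> b \<otimes>\<^bsub>B\<^esub> inv\<^bsub>B\<^esub> g) y = b y"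
    using g(1) b KB fixed by (simp add: mult_apply subsetD)
  then have "g \<otimes>\<^bsub>B\<^esub> b \<otimes>\<^bsub>B\<^esub> inv\<^bsub>B\<^esub> g = b"
    using bij_betw_imp_inj_on[OF bij] g(2)[OF b(1)] b(1) unfolding inj_on_def by blast
  then have "g \<otimes>\<^bsub>B\<^esub> b = b \<otimes>\<^bsub>B\<^esub> g"
    using B.inv_solve_right'[of b "g \<otimes>\<^bsub>B\<^esub> b" g] g(1) b(1) KB by auto
  then have "b \<in> K \<inter> centralizer B {g}"
    using b(1) KB by (auto simp: centralizer_def)
  moreover have "b \<noteq> \<one>\<^bsub>B\<^esub>"
    using b fixed(1,3) one_apply by auto
  ultimately have nontrivial: "K \<inter> centralizer B {g} \<noteq> {\<one>\<^bsub>B\<^esub>}"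
    by blast
  have "card K = card \<Omega> - 1"
    using bij_betw_same_card[OF bij] fin x by simp
  then have "Factorial_Ring.prime (order (B\<lparr>carrier := K\<rparr>))"
    using p by (simp add: order_def)
  moreover have "subgroup (K \<inter> centralizer B {g}) (B\<lparr>carrier := K\<rparr>)"
    using B.subgroup_incl[OF B.subgroups_Inter_pair[OF K(1) B.centralizer_subgroup] K(1)] g(1)
    by auto
  ultimately have "K \<inter> centralizer B {g} = K"
    using group.prime_order_subgroup_eq_carrier[OF B.subgroup_imp_group[OF K(1)]] nontrivial
    by simp
  then have "k \<in> centralizer B {g}"
    using k by blast
  then show ?thesis
    by (auto simp: centralizer_def)
qed

lemma eq_one_if_normalizes_and_fixes_three_points:
  assumes fin: "finite \<Omega>" and x: "x \<in> \<Omega>" and p: "Factorial_Ring.prime (card \<Omega> - 1)"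
    and K: "subgroup K B" "\<And>a b. a \<in> K \<Longrightarrow> b \<in> K \<Longrightarrow> a \<otimes>\<^bsub>B\<^esub> b = b \<otimes>\<^bsub>B\<^esub> a"
      "\<And>k. k \<in> K \<Longrightarrow> k x = x" "transitive_perm_group (\<Omega> - {x}) K"
    and g: "g \<in> carrier B" "\<And>k. k \<in> K \<Longrightarrow> g \<otimes>\<^bsub>B\<^esub> k \<otimes>\<^bsub>B\<^esub> inv\<^bsub>B\<^esub> g \<in> K"
    and fixed: "g x = x" "y \<in> \<Omega> - {x}" "z \<in> \<Omega> - {x}" "y \<noteq> z" "g y = y" "g z = z"
  shows "g = \<one>\<^bsub>B\<^esub>"
proof (rule eq_one_if_fixes_all[OF g(1)])
  fix w assume w: "w \<in> \<Omega>"
  show "g w = w"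
  proof (cases "w = x")
    case True
    then show ?thesis
      using fixed(1) by simp
  next
    case False
    then obtain k where k: "k \<in> K" "k y = w"
      using K(4) fixed(2) w unfolding transitive_perm_group_def by blast
    have "g \<otimes>\<^bsub>B\<^esub> k = k \<otimes>\<^bsub>B\<^esub> g"
      by (rule commute_if_normalizes_and_fixes_two_points[of x K g y z k, OF fin x p K(1)])
        (use K g fixed(2-) k(1) in auto)
    then show ?thesis
      using commute_fixes_image[OF g(1)] k subgroup.subset[OF K(1)] fixed(2,5) by blast
  qed
qed

theorem eq_one_if_fixes_three_points:
  assumes fin: "finite \<Omega>" and p: "Factorial_Ring.prime (card \<Omega> - 1)"
    and prim: "primitive_perm_group \<Omega> G" and solv: "solvable (perm_subgroup \<Omega> G)"
    and g: "g \<in> G" and fixed: "x \<in> \<Omega>" "y \<in> \<Omega> - {x}" "z \<in> \<Omega> - {x}" "y \<noteq> z"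
      "g x = x" "g y = y" "g z = z"
  shows "g = \<one>\<^bsub>B\<^esub>"
proof (rule ccontr)
  assume g1: "g \<noteq> \<one>\<^bsub>B\<^esub>"
  then have "G \<noteq> {\<one>\<^bsub>B\<^esub>}" "{h \<in> G. h x = x} \<noteq> {\<one>\<^bsub>B\<^esub>}"
    using g fixed(5) by auto
  obtain N where N: "subgroup N B" "N \<subseteq> G"
    "\<And>h n. h \<in> G \<Longrightarrow> n \<in> N \<Longrightarrow> h \<otimes>\<^bsub>B\<^esub> n \<otimes>\<^bsub>B\<^esub> inv\<^bsub>B\<^esub> h \<in> N"
    "\<And>a b. a \<in> N \<Longrightarrow> b \<in> N \<Longrightarrow> a \<otimes>\<^bsub>B\<^esub> b = b \<otimes>\<^bsub>B\<^esub> a" "transitive_perm_group \<Omega> N"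
    using primitive_solvable_abelian_normal_subgroup[OF prim solv \<open>G \<noteq> {\<one>\<^bsub>B\<^esub>}\<close>] by blast
  obtain r :: nat and E where E: "Factorial_Ring.prime r" "subgroup E B" "E \<subseteq> {h \<in> G. h x = x}"
    "E \<noteq> {\<one>\<^bsub>B\<^esub>}"
    "\<And>s k. s \<in> {h \<in> G. h x = x} \<Longrightarrow> k \<in> E \<Longrightarrow> s \<otimes>\<^bsub>B\<^esub> k \<otimes>\<^bsub>B\<^esub> inv\<^bsub>B\<^esub> s \<in> E"
    "\<And>a b. a \<in> E \<Longrightarrow> b \<in> E \<Longrightarrow> a \<otimes>\<^bsub>B\<^esub> b = b \<otimes>\<^bsub>B\<^esub> a" "\<And>a. a \<in> E \<Longrightarrow> a [^]\<^bsub>B\<^esub> r = \<one>\<^bsub>B\<^esub>"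
    by (rule stabilizer_elementary_abelian_normal_subgroup[OF fin solv fixed(1)
      \<open>{h \<in> G. h x = x} \<noteq> {\<one>\<^bsub>B\<^esub>}\<close>]) (rule that)
  have E_fixes: "\<And>k. k \<in> E \<Longrightarrow> k x = x"
    using E(3) by blast
  have "w = x" if "w \<in> \<Omega>" "\<forall>k\<in>E. k w = w" for w
    using normal_subgroup_of_stabilizer_fixes_only_base_point[OF prim fixed(1) N E(2-5)] that by blast
  then have "{w \<in> \<Omega>. \<forall>k\<in>E. k w = w} = {x}"
    using fixed(1) E_fixes by blast
  then have transitive: "transitive_perm_group (\<Omega> - {x}) E"
    using elementary_abelian_transitive_on_complement[OF fin fixed(1) p E(2,1,7)] by simp
  have normalizes: "g \<otimes>\<^bsub>B\<^esub> k \<otimes>\<^bsub>B\<^esub> inv\<^bsub>B\<^esub> g \<in> E" if "k \<in> E" for k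
    using E(5) g fixed(5) that by blast
  have "g = \<one>\<^bsub>B\<^esub>"
    by (rule eq_one_if_normalizes_and_fixes_three_points[of x E g y z, OF fin fixed(1) p E(2,6)])
      (use E_fixes transitive normalizes in_carrier[OF g] fixed(2-) in auto)
  with g1 show False ..
qed

end

theorem proposition2p3:
  fixes \<Omega> :: "'a set" and G :: "('a \<Rightarrow> 'a) set" and k d :: nat
  assumes "k \<ge> 1" and "d = 2 ^ k" and "Factorial_Ring.prime (d - 1)"
    and "finite \<Omega>" and "card \<Omega> = d"
    and "subgroup G (BijGroup \<Omega>)"
    and "primitive_perm_group \<Omega> G"
    and "solvable (perm_subgroup \<Omega> G)"
  shows "\<forall>g\<in>G. g \<noteq> \<one>\<^bsub>BijGroup \<Omega>\<^esub> \<longrightarrow> card {x\<in>\<Omega>. g x = x} \<le> 2"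
proof (intro ballI impI)
  interpret perm_group \<Omega> G
    by (rule perm_group.intro) fact
  fix g assume g: "g \<in> G" "g \<noteq> \<one>\<^bsub>BijGroup \<Omega>\<^esub>"
  show "card {x \<in> \<Omega>. g x = x} \<le> 2"
  proof (rule ccontr)
    assume "\<not> card {x \<in> \<Omega>. g x = x} \<le> 2"
    then obtain T where "T \<subseteq> {x \<in> \<Omega>. g x = x}" "card T = 3"
      using obtain_subset_with_card_n[of 3 "{x \<in> \<Omega>. g x = x}"] by auto
    then obtain x y z where "x \<in> \<Omega>" "y \<in> \<Omega> - {x}" "z \<in> \<Omega> - {x}" "y \<noteq> z"
      "g x = x" "g y = y" "g z = z"
      by (auto simp: card_3_iff)
    then show False
      using eq_one_if_fixes_three_points assms(3-5,7,8) g by auto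
  qed
qed

end
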